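(* Consider the symmetrical BSPR network with $K$ relays, i.e., $p_{s,i}=p_s$ and $p_{i,d}=p_d$ for all $i$, with $0\le p_s<1/2$, $0\le p_d<1/2$. Coded transmission with forwarding relays achieves every rate $R<R_\textnormal{coded,f}$, where \[ R_\textnormal{coded,f}=1+Kp\log p+Kq\log q-\sum_{l=0}^{K-1}\binom{K-1}{l}\left(q^lp^{K-l}+q^{K-l}p^l\right)\log\left(q^lp^{K-l}+q^{K-l}p^l\right), \] with $p=p_s(1-p_d)+(1-p_s)p_d$ and $q=1-p$.
   Context: Logarithms are base 2, with $0\log 0=0$. BSPR network: at each network use the source sends $U\in\{0,1\}$; relay $i$ receives $V_i=U\oplus Z_i$, $\Pr\{Z_i=1\}=p_{s,i}$; relay $i$ sends $X_i$ and the destination receives $Y_i=X_i\oplus E_i$, $\Pr\{E_i=1\}=p_{i,d}$; all noises mutually independent and i.i.d. over time. Codes: message $W$ uniform on $\{0,\dots,M-1\}$; source encoder on $W$; relay $i$'s transmission at time $t$ depends only on its past received symbols; destination decodes from all received symbols; rate is $\log_2 M$ per network use; $R$ is achievable if for every $\epsilon>0$ there exist codes of rate at least $R$ and arbitrarily large length with average error probability at most $\epsilon$. A forwarding relay sets $X_i[t]=V_i[t-1]$ ($X_i[1]=0$), giving the effective channel $Y_i=U\oplus Z_i\oplus E_i$. Coded transmission with forwarding relays: all relays forward and the source uses a channel code for the effective point-to-point channel from $U$ to $(Y_1,\dots,Y_K)$ (with $n+1$ network uses for $n$ code symbols), the destination decoding from $(Y_1,\dots,Y_K)$. *)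

theory Defs
  imports "HOL-Probability.Probability"
begin

definition plogp :: "real \<Rightarrow> real" where
  "plogp x = (if x = 0 then 0 else x * log 2 x)"

definition R_coded_f :: "nat \<Rightarrow> real \<Rightarrow> real" where
  "R_coded_f K p = (let q = 1 - p in
     1 + real K * plogp p + real K * plogp q
     - (\<Sum>l<K. real ((K - 1) choose l) * plogp (q ^ l * p ^ (K - l) + q ^ (K - l) * p ^ l)))"

text \<open>i.i.d. Bernoulli(a) noise on network uses t = 0..n (0-indexed) and relays i = 0..K-1;
  True means a bit flip.  Entries outside the index set are False.\<close>
definition noise_pmf :: "nat \<Rightarrow> nat \<Rightarrow> real \<Rightarrow> (nat \<times> nat \<Rightarrow> bool) pmf" where
  "noise_pmf n K a = Pi_pmf ({..n} \<times> {..<K}) False (\<lambda>_. bernoulli_pmf a)"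

text \<open>Source sends U[t] = enc w t; relay i receives V_i[t] = U[t] xor Z(t,i); it transmits
  X_i[0] = 0 and X_i[t] = V_i[t-1]; the destination receives Y_i[t] = X_i[t] xor E(t,i).\<close>
definition fwd_output ::
  "nat \<Rightarrow> nat \<Rightarrow> (nat \<Rightarrow> nat \<Rightarrow> bool) \<Rightarrow> nat \<Rightarrow> (nat \<times> nat \<Rightarrow> bool) \<Rightarrow> (nat \<times> nat \<Rightarrow> bool)
     \<Rightarrow> (nat \<times> nat \<Rightarrow> bool)" where
  "fwd_output n K enc w z e = (\<lambda>(t, i).
     if t \<le> n \<and> i < K then
       ((if t = 0 then False else (enc w (t - 1) \<noteq> z (t - 1, i))) \<noteq> e (t, i))
     else False)"

definition fwd_avg_error ::
  "nat \<Rightarrow> nat \<Rightarrow> real \<Rightarrow> real \<Rightarrow> nat \<Rightarrow> (nat \<Rightarrow> nat \<Rightarrow> bool) \<Rightarrow> ((nat \<times> nat \<Rightarrow> bool) \<Rightarrow> nat) \<Rightarrow> real" where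
  "fwd_avg_error n K ps pd M enc dec =
     (\<Sum>w<M. measure_pmf.prob (pair_pmf (noise_pmf n K ps) (noise_pmf n K pd))
                {(z, e). dec (fwd_output n K enc w z e) \<noteq> w}) / real M"

text \<open>R is achievable by coded transmission with forwarding relays: for every eps > 0 there are
  codes with n code symbols (n+1 network uses) of arbitrarily large length, rate log2 M / (n+1)
  at least R, and average error probability at most eps.\<close>
definition fwd_coded_achievable :: "nat \<Rightarrow> real \<Rightarrow> real \<Rightarrow> real \<Rightarrow> bool" where
  "fwd_coded_achievable K ps pd R \<longleftrightarrow>
     (\<forall>\<epsilon>>0. \<forall>N. \<exists>n M enc dec. N \<le> n \<and> 1 \<le> M \<and>
        R \<le> log 2 (real M) / real (n + 1) \<and> fwd_avg_error n K ps pd M enc dec \<le> \<epsilon>)"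

end

theory Submission
  imports Defs
begin

text \<open>When all relays forward, code symbol t reaches the destination over K paths, each a
  binary symmetric channel whose crossover probability is p = ps (1 - pd) + (1 - ps) pd, with
  independent noise on different paths and uses.  The number of received ones is therefore
  Bin(K, p) or Bin(K, 1 - p) according to the input bit, and R_coded_f K p is the mutual information
  of this binomial channel under a uniform input bit.  Rates below a mutual information are achieved
  by Feinstein's maximal code construction: codewords drawn from the i.i.d. input law are decoded on
  the outputs whose likelihood ratio exceeds 2 powr T, and Hoeffding's inequality bounds the
  probability that the empirical information density of a codeword falls below T.\<close>

lemma measure_pmf_prob_bind_finite:
  assumes "finite (set_pmf P)"
  shows "measure_pmf.prob (bind_pmf P V) A = (\<Sum>x\<in>set_pmf P. pmf P x * measure_pmf.prob (V x) A)"
proof -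
  have "ennreal (measure_pmf.prob (bind_pmf P V) A) = (\<integral>\<^sup>+x. emeasure (V x) A \<partial>P)"
    by (simp add: measure_pmf.emeasure_eq_measure[symmetric])
  also have "\<dots> = (\<Sum>x\<in>set_pmf P. ennreal (pmf P x * measure_pmf.prob (V x) A))"
    using assms by (simp add: nn_integral_measure_pmf_finite measure_pmf.emeasure_eq_measure
                              ennreal_mult mult.commute)
  also have "\<dots> = ennreal (\<Sum>x\<in>set_pmf P. pmf P x * measure_pmf.prob (V x) A)"
    by (rule sum_ennreal) auto
  finally show ?thesis
    by (subst (asm) ennreal_inj) (auto intro!: sum_nonneg)
qed

lemma measure_pmf_prob_compl:
  "measure_pmf.prob M (- A) = 1 - measure_pmf.prob M A"
  using measure_pmf.prob_compl[of A M] by (simp add: Compl_eq_Diff_UNIV)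

lemma Pi_pmf_map_dependent:
  assumes "finite A"
  shows "Pi_pmf A d' (\<lambda>t. map_pmf (g t) (P t))
         = map_pmf (\<lambda>h t. if t \<in> A then g t (h t) else d') (Pi_pmf A d P)"
proof -
  have "Pi_pmf A d' (\<lambda>t. map_pmf (g t) (P t))
      = Pi_pmf A d' (\<lambda>t. bind_pmf (P t) (\<lambda>v. return_pmf (g t v)))"
    by (simp add: map_pmf_def)
  also have "\<dots> = bind_pmf (Pi_pmf A d P) (\<lambda>h. Pi_pmf A d' (\<lambda>t. return_pmf (g t (h t))))"
    using assms by (rule Pi_pmf_bind)
  also have "\<dots> = map_pmf (\<lambda>h t. if t \<in> A then g t (h t) else d') (Pi_pmf A d P)"
    using assms by (simp add: map_pmf_def)
  finally show ?thesis .
qed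

lemma Pi_pmf_map2:
  assumes "finite A"
  shows "map_pmf (\<lambda>(f, g) j. if j \<in> A then h (f j) (g j) else d) (pair_pmf (Pi_pmf A d1 P) (Pi_pmf A d2 Q))
         = Pi_pmf A d (\<lambda>j. map_pmf (\<lambda>(a, b). h a b) (pair_pmf (P j) (Q j)))"
proof -
  have pair_bind: "map_pmf F (pair_pmf M N) = bind_pmf M (\<lambda>x. map_pmf (\<lambda>y. F (x, y)) N)" for F M N
    unfolding pair_pmf_def map_pmf_def by (simp add: bind_assoc_pmf bind_return_pmf)
  have "Pi_pmf A d (\<lambda>j. map_pmf (\<lambda>(a, b). h a b) (pair_pmf (P j) (Q j)))
      = Pi_pmf A d (\<lambda>j. bind_pmf (P j) (\<lambda>a. map_pmf (h a) (Q j)))"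
    by (simp add: pair_bind)
  also have "\<dots> = bind_pmf (Pi_pmf A d1 P) (\<lambda>f. Pi_pmf A d (\<lambda>j. map_pmf (h (f j)) (Q j)))"
    using assms by (rule Pi_pmf_bind)
  also have "\<dots> = bind_pmf (Pi_pmf A d1 P)
      (\<lambda>f. map_pmf (\<lambda>g j. if j \<in> A then h (f j) (g j) else d) (Pi_pmf A d2 Q))"
    using assms by (subst Pi_pmf_map_dependent) auto
  finally show ?thesis
    by (simp add: pair_bind)
qed

lemma Pi_pmf_curry:
  assumes A: "finite A" and B: "finite B"
  shows "map_pmf (\<lambda>f a b. f (a, b)) (Pi_pmf (A \<times> B) d (\<lambda>_. P))
         = Pi_pmf A (\<lambda>_. d) (\<lambda>_. Pi_pmf B d (\<lambda>_. P))"
proof (rule pmf_eqI)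
  fix g :: "'a \<Rightarrow> 'b \<Rightarrow> 'c"
  have "inj (\<lambda>(f :: 'a \<times> 'b \<Rightarrow> 'c) a b. f (a, b))"
    by (rule inj_on_inverseI[where g = case_prod]) simp
  then have "pmf (map_pmf (\<lambda>f a b. f (a, b)) (Pi_pmf (A \<times> B) d (\<lambda>_. P))) g
      = pmf (Pi_pmf (A \<times> B) d (\<lambda>_. P)) (case_prod g)"
    using pmf_map_inj'[of "\<lambda>f a b. f (a, b)" _ "case_prod g"] by simp
  also have "\<dots> = pmf (Pi_pmf A (\<lambda>_. d) (\<lambda>_. Pi_pmf B d (\<lambda>_. P))) g"
  proof (cases "\<forall>a b. (a, b) \<notin> A \<times> B \<longrightarrow> g a b = d")
    case True
    then have "pmf (Pi_pmf (A \<times> B) d (\<lambda>_. P)) (case_prod g) = (\<Prod>a\<in>A. \<Prod>b\<in>B. pmf P (g a b))"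
      using A B by (simp add: pmf_Pi prod.cartesian_product split_def)
    also have "\<dots> = pmf (Pi_pmf A (\<lambda>_. d) (\<lambda>_. Pi_pmf B d (\<lambda>_. P))) g"
      using A B True by (simp add: pmf_Pi fun_eq_iff)
    finally show ?thesis .
  next
    case False
    then obtain a b where ab: "(a, b) \<notin> A \<times> B" "g a b \<noteq> d"
      by auto
    then have "pmf (Pi_pmf A (\<lambda>_. d) (\<lambda>_. Pi_pmf B d (\<lambda>_. P))) g = 0"
      using A B by (cases "a \<in> A") (auto simp: pmf_Pi fun_eq_iff prod_zero_iff)
    moreover have "pmf (Pi_pmf (A \<times> B) d (\<lambda>_. P)) (case_prod g) = 0"
      using A B ab by (auto simp: pmf_Pi)
    ultimately show ?thesis
      by simp
  qed
  finally show "pmf (map_pmf (\<lambda>f a b. f (a, b)) (Pi_pmf (A \<times> B) d (\<lambda>_. P))) g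
      = pmf (Pi_pmf A (\<lambda>_. d) (\<lambda>_. Pi_pmf B d (\<lambda>_. P))) g" .
qed

section \<open>Feinstein's maximal code lemma\<close>

definition feinstein_code ::
  "('x \<Rightarrow> 'y pmf) \<Rightarrow> ('x \<Rightarrow> 'y set) \<Rightarrow> 'y set \<Rightarrow> real \<Rightarrow> ('x \<times> 'y set) list \<Rightarrow> bool" where
  "feinstein_code V B Ys \<epsilon> cs \<longleftrightarrow>
     (\<forall>j<length cs. snd (cs!j) \<subseteq> B (fst (cs!j)) \<inter> Ys
                     \<and> 1 - \<epsilon> \<le> measure_pmf.prob (V (fst (cs!j))) (snd (cs!j)))
     \<and> (\<forall>i<length cs. \<forall>j<length cs. i \<noteq> j \<longrightarrow> snd (cs!i) \<inter> snd (cs!j) = {})"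

lemma feinstein_code_Nil: "feinstein_code V B Ys \<epsilon> []"
  by (simp add: feinstein_code_def)

lemma feinstein_code_length_le:
  assumes "finite Ys" "\<epsilon> < 1" "feinstein_code V B Ys \<epsilon> cs"
  shows "length cs \<le> card Ys"
proof -
  define f where "f j = (SOME y. y \<in> snd (cs!j))" for j
  have "snd (cs!j) \<noteq> {}" if "j < length cs" for j
    using assms(2,3) that by (fastforce simp: feinstein_code_def)
  then have f: "f j \<in> snd (cs!j)" if "j < length cs" for j
    using that by (simp add: f_def some_in_eq)
  have "inj_on f {..<length cs}"
  proof (rule inj_onI, rule ccontr)
    fix i j assume ij: "i \<in> {..<length cs}" "j \<in> {..<length cs}" "f i = f j" "i \<noteq> j"
    then have "snd (cs!i) \<inter> snd (cs!j) = {}"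
      using assms(3) by (simp add: feinstein_code_def)
    with f ij show False by (metis disjoint_iff lessThan_iff)
  qed
  moreover have "f ` {..<length cs} \<subseteq> Ys"
    using f assms(3) by (auto simp: feinstein_code_def)
  ultimately show ?thesis
    using card_inj_on_le[OF _ _ assms(1)] by fastforce
qed

lemma feinstein_code_snoc:
  assumes cs: "feinstein_code V B Ys \<epsilon> cs" and E: "E \<subseteq> B x \<inter> Ys"
    and fresh: "E \<inter> \<Union>(snd ` set cs) = {}" and pr: "1 - \<epsilon> \<le> measure_pmf.prob (V x) E"
  shows "feinstein_code V B Ys \<epsilon> (cs @ [(x, E)])"
proof -
  let ?c = "cs @ [(x, E)]"
  have nth: "?c ! j = (if j < length cs then cs ! j else (x, E))" if "j < length ?c" for j
    using that by (auto simp: nth_append)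
  have "snd (?c!j) \<subseteq> B (fst (?c!j)) \<inter> Ys \<and> 1 - \<epsilon> \<le> measure_pmf.prob (V (fst (?c!j))) (snd (?c!j))"
    if "j < length ?c" for j
    using cs E pr nth[OF that] unfolding feinstein_code_def by (cases "j < length cs") simp_all
  moreover have "snd (?c!i) \<inter> snd (?c!j) = {}" if "i < length ?c" "j < length ?c" "i \<noteq> j" for i j
  proof -
    have "snd (cs!k) \<inter> E = {}" if "k < length cs" for k
      using fresh that nth_mem by blast
    with cs that show ?thesis
      unfolding nth[OF that(1)] nth[OF that(2)] feinstein_code_def
      by (cases "i < length cs"; cases "j < length cs") (simp_all add: Int_commute)
  qed
  ultimately show ?thesis
    unfolding feinstein_code_def by blast
qed

lemma feinstein_code_decoding_error:
  assumes cs: "feinstein_code V B Ys \<epsilon> cs" and j: "j < length cs"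
  shows "measure_pmf.prob (V (fst (cs!j))) {y. (LEAST i. i < length cs \<and> y \<in> snd (cs!i)) \<noteq> j} \<le> \<epsilon>"
proof -
  have "(LEAST i. i < length cs \<and> y \<in> snd (cs!i)) = j" if "y \<in> snd (cs!j)" for y
  proof (rule Least_equality)
    show "j < length cs \<and> y \<in> snd (cs!j)" using j that by simp
  next
    fix i assume "i < length cs \<and> y \<in> snd (cs!i)"
    with cs j that show "j \<le> i"
      unfolding feinstein_code_def by (metis disjoint_iff linorder_le_less_linear order_less_irrefl)
  qed
  then have "measure_pmf.prob (V (fst (cs!j))) {y. (LEAST i. i < length cs \<and> y \<in> snd (cs!i)) \<noteq> j}
      \<le> measure_pmf.prob (V (fst (cs!j))) (- snd (cs!j))"
    by (intro measure_pmf.finite_measure_mono) auto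
  also have "\<dots> \<le> \<epsilon>"
    using cs j by (auto simp: measure_pmf_prob_compl feinstein_code_def)
  finally show ?thesis .
qed

lemma feinstein_code_prob_Union_le:
  assumes "feinstein_code V B Ys \<epsilon> cs" and "\<And>x. measure_pmf.prob Q (B x) \<le> \<gamma>"
  shows "measure_pmf.prob Q (\<Union>(snd ` set cs)) \<le> real (length cs) * \<gamma>"
proof -
  have "\<Union>(snd ` set cs) = (\<Union>j<length cs. snd (cs!j))"
    by (auto simp: set_conv_nth)
  then have "measure_pmf.prob Q (\<Union>(snd ` set cs)) \<le> (\<Sum>j<length cs. measure_pmf.prob Q (snd (cs!j)))"
    by (simp add: measure_pmf.finite_measure_subadditive_finite)
  also have "\<dots> \<le> (\<Sum>j<length cs. \<gamma>)"
  proof (rule sum_mono)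
    fix j assume "j \<in> {..<length cs}"
    then have "measure_pmf.prob Q (snd (cs!j)) \<le> measure_pmf.prob Q (B (fst (cs!j)))"
      using assms(1) by (intro measure_pmf.finite_measure_mono) (auto simp: feinstein_code_def)
    also have "\<dots> \<le> \<gamma>" by (rule assms(2))
    finally show "measure_pmf.prob Q (snd (cs!j)) \<le> \<gamma>" .
  qed
  finally show ?thesis by simp
qed

text \<open>A code of maximal length cannot be extended, so for every input x the part of B x
  outside its decoding sets has probability below 1 - \<epsilon>; averaging over P bounds the output
  probability of the decoding sets from below, while each of them has output probability at
  most \<gamma>.\<close>
lemma feinstein_lemma:
  fixes P :: "'x pmf" and V :: "'x \<Rightarrow> 'y pmf"
  assumes fin: "finite Ys" "finite (set_pmf P)"
    and sup: "\<And>x. x \<in> set_pmf P \<Longrightarrow> set_pmf (V x) \<subseteq> Ys"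
    and B: "\<And>x. measure_pmf.prob (bind_pmf P V) (B x) \<le> \<gamma>"
    and \<epsilon>: "0 < \<epsilon>" "\<epsilon> < 1"
  shows "\<exists>xs dec. \<epsilon> - (\<Sum>x\<in>set_pmf P. pmf P x * measure_pmf.prob (V x) (- B x)) \<le> real (length xs) * \<gamma>
           \<and> (\<forall>j<length xs. measure_pmf.prob (V (xs!j)) {y. dec y \<noteq> j} \<le> \<epsilon>)"
proof -
  let ?L = "length ` {cs. feinstein_code V B Ys \<epsilon> cs}"
  have "?L \<subseteq> {..card Ys}"
    using feinstein_code_length_le[OF fin(1) \<epsilon>(2)] by auto
  then have "finite ?L"
    by (rule finite_subset) simp
  moreover have "length ([] :: ('x \<times> 'y set) list) \<in> ?L"
    using feinstein_code_Nil[of V B Ys \<epsilon>] by blast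
  ultimately have "Max ?L \<in> ?L"
    by (intro Max_in) auto
  then obtain cs where cs: "feinstein_code V B Ys \<epsilon> cs" and cs_max: "length cs = Max ?L"
    by auto
  have maximal: "length cs' \<le> length cs" if "feinstein_code V B Ys \<epsilon> cs'" for cs'
    unfolding cs_max using \<open>finite ?L\<close> that by (intro Max_ge) auto
  define D where "D = \<Union>(snd ` set cs)"
  have miss: "\<epsilon> - measure_pmf.prob (V x) D \<le> measure_pmf.prob (V x) (- B x)" if x: "x \<in> set_pmf P" for x
  proof -
    have "measure_pmf.prob (V x) (B x \<inter> Ys - D) < 1 - \<epsilon>"
    proof (rule ccontr)
      assume "\<not> ?thesis"
      then have "feinstein_code V B Ys \<epsilon> (cs @ [(x, B x \<inter> Ys - D)])"
        by (intro feinstein_code_snoc[OF cs]) (auto simp: D_def)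
      from maximal[OF this] show False by simp
    qed
    moreover have "measure_pmf.prob (V x) (B x) \<le> measure_pmf.prob (V x) (D \<union> (B x \<inter> Ys - D))"
      using sup[OF x] by (subst (1 2) measure_Int_set_pmf[symmetric])
                         (intro measure_pmf.finite_measure_mono, auto)
    moreover have "measure_pmf.prob (V x) (D \<union> (B x \<inter> Ys - D))
        \<le> measure_pmf.prob (V x) D + measure_pmf.prob (V x) (B x \<inter> Ys - D)"
      by (intro measure_Un_le) auto
    ultimately show ?thesis
      using measure_pmf_prob_compl[of "V x" "B x"] by linarith
  qed
  have "\<epsilon> - (\<Sum>x\<in>set_pmf P. pmf P x * measure_pmf.prob (V x) (- B x))
        = (\<Sum>x\<in>set_pmf P. pmf P x * (\<epsilon> - measure_pmf.prob (V x) (- B x)))"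
    using fin(2) by (simp add: sum_pmf_eq_1 algebra_simps sum_subtractf sum_distrib_left[symmetric])
  also have "\<dots> \<le> (\<Sum>x\<in>set_pmf P. pmf P x * measure_pmf.prob (V x) D)"
    using miss by (intro sum_mono mult_left_mono) (auto simp: diff_le_eq add.commute)
  also have "\<dots> = measure_pmf.prob (bind_pmf P V) D"
    using fin(2) by (simp add: measure_pmf_prob_bind_finite)
  also have "\<dots> \<le> real (length cs) * \<gamma>"
    unfolding D_def using cs B by (rule feinstein_code_prob_Union_le)
  finally have "\<epsilon> - (\<Sum>x\<in>set_pmf P. pmf P x * measure_pmf.prob (V x) (- B x))
      \<le> real (length (map fst cs)) * \<gamma>"
    by simp
  then show ?thesis
    using feinstein_code_decoding_error[OF cs]
    by (intro exI[of _ "map fst cs"] exI[of _ "\<lambda>y. LEAST i. i < length cs \<and> y \<in> snd (cs!i)"] conjI allI impI)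
       simp_all
qed

section \<open>Memoryless channels\<close>

text \<open>Sequences of length n are functions on nat that are undefined outside {..<n}.\<close>
definition iid_pmf :: "nat \<Rightarrow> 'a pmf \<Rightarrow> (nat \<Rightarrow> 'a) pmf" where
  "iid_pmf n P = Pi_pmf {..<n} undefined (\<lambda>_. P)"

definition dmc_pmf :: "('x \<Rightarrow> 'y pmf) \<Rightarrow> nat \<Rightarrow> (nat \<Rightarrow> 'x) \<Rightarrow> (nat \<Rightarrow> 'y) pmf" where
  "dmc_pmf W n x = Pi_pmf {..<n} undefined (\<lambda>t. W (x t))"

definition joint_pmf :: "'x pmf \<Rightarrow> ('x \<Rightarrow> 'y pmf) \<Rightarrow> ('x \<times> 'y) pmf" where
  "joint_pmf P W = bind_pmf P (\<lambda>x. map_pmf (Pair x) (W x))"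

definition info_density :: "'x pmf \<Rightarrow> ('x \<Rightarrow> 'y pmf) \<Rightarrow> 'x \<times> 'y \<Rightarrow> real" where
  "info_density P W = (\<lambda>(x, y). log 2 (pmf (W x) y / pmf (bind_pmf P W) y))"

definition mutual_info :: "'x pmf \<Rightarrow> ('x \<Rightarrow> 'y pmf) \<Rightarrow> real" where
  "mutual_info P W = measure_pmf.expectation (joint_pmf P W) (info_density P W)"

definition high_likelihood_outputs ::
  "'x pmf \<Rightarrow> ('x \<Rightarrow> 'y pmf) \<Rightarrow> nat \<Rightarrow> real \<Rightarrow> (nat \<Rightarrow> 'x) \<Rightarrow> (nat \<Rightarrow> 'y) set" where
  "high_likelihood_outputs P W n T x =
     {y. 2 powr T * pmf (iid_pmf n (bind_pmf P W)) y < pmf (dmc_pmf W n x) y}"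

lemma bind_iid_pmf_dmc_pmf: "bind_pmf (iid_pmf n P) (dmc_pmf W n) = iid_pmf n (bind_pmf P W)"
  unfolding iid_pmf_def dmc_pmf_def by (rule Pi_pmf_bind[symmetric]) simp

lemma set_iid_pmf:
  "set_pmf (iid_pmf n P) = PiE_dflt {..<n} undefined (\<lambda>_. set_pmf P)"
  unfolding iid_pmf_def by (simp add: set_Pi_pmf o_def)

lemma set_dmc_pmf:
  "set_pmf (dmc_pmf W n x) = PiE_dflt {..<n} undefined (\<lambda>t. set_pmf (W (x t)))"
  unfolding dmc_pmf_def by (simp add: set_Pi_pmf o_def)

lemma finite_set_iid_pmf: "finite (set_pmf P) \<Longrightarrow> finite (set_pmf (iid_pmf n P))"
  by (auto simp: set_iid_pmf)

lemma set_dmc_pmf_subset: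
  assumes "\<And>t. t < n \<Longrightarrow> set_pmf (W (x t)) \<subseteq> Y"
  shows "set_pmf (dmc_pmf W n x) \<subseteq> PiE_dflt {..<n} undefined (\<lambda>_. Y)"
  using assms by (auto simp: set_dmc_pmf PiE_dflt_def)

lemma finite_set_dmc_pmf:
  assumes "\<And>x. finite (set_pmf (W x))"
  shows "finite (set_pmf (dmc_pmf W n x))"
  using assms by (auto simp: set_dmc_pmf)

lemma prob_likelihood_ratio_gt_le:
  assumes "finite (set_pmf V)" "c > 0"
  shows "measure_pmf.prob Q {y. c * pmf Q y < pmf V y} \<le> 1 / c"
proof -
  define S where "S = {y. c * pmf Q y < pmf V y}"
  have "S \<subseteq> set_pmf V"
    using assms(2) by (auto simp: S_def set_pmf_iff order.strict_iff_not dest: order.strict_trans1[rotated])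
  then have fin: "finite S"
    using assms(1) finite_subset by blast
  have "measure_pmf.prob Q S = (\<Sum>y\<in>S. pmf Q y)"
    using fin by (simp add: measure_measure_pmf_finite)
  also have "\<dots> \<le> (\<Sum>y\<in>S. pmf V y / c)"
    using assms(2) by (intro sum_mono) (auto simp: S_def field_simps)
  also have "\<dots> = measure_pmf.prob V S / c"
    using fin by (simp add: measure_measure_pmf_finite sum_divide_distrib)
  also have "\<dots> \<le> 1 / c"
    using assms(2) by (intro divide_right_mono) auto
  finally show ?thesis
    unfolding S_def .
qed

lemma prob_high_likelihood_outputs_le:
  assumes "\<And>x. finite (set_pmf (W x))"
  shows "measure_pmf.prob (bind_pmf (iid_pmf n P) (dmc_pmf W n)) (high_likelihood_outputs P W n T x)
         \<le> 2 powr (-T)"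
  using prob_likelihood_ratio_gt_le[OF finite_set_dmc_pmf[OF assms], of "2 powr T"]
  by (simp add: bind_iid_pmf_dmc_pmf high_likelihood_outputs_def powr_minus_divide)

lemma Pi_pmf_joint_pmf:
  "Pi_pmf {..<n} (undefined, undefined) (\<lambda>_. joint_pmf P W)
   = map_pmf (\<lambda>(x, y) t. (x t, y t)) (bind_pmf (iid_pmf n P) (\<lambda>x. map_pmf (Pair x) (dmc_pmf W n x)))"
proof -
  have "Pi_pmf {..<n} (undefined, undefined) (\<lambda>_. joint_pmf P W)
      = bind_pmf (iid_pmf n P)
          (\<lambda>x. Pi_pmf {..<n} (undefined, undefined) (\<lambda>t. map_pmf (Pair (x t)) (W (x t))))"
    unfolding joint_pmf_def iid_pmf_def by (rule Pi_pmf_bind) simp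
  also have "\<dots> = bind_pmf (iid_pmf n P) (\<lambda>x. map_pmf
      (\<lambda>y t. if t \<in> {..<n} then (x t, y t) else (undefined, undefined)) (dmc_pmf W n x))"
    unfolding dmc_pmf_def by (subst Pi_pmf_map_dependent) simp_all
  also have "\<dots> = map_pmf (\<lambda>(x, y) t. (x t, y t))
      (bind_pmf (iid_pmf n P) (\<lambda>x. map_pmf (Pair x) (dmc_pmf W n x)))"
    unfolding map_bind_pmf pmf.map_comp
    by (intro bind_pmf_cong refl map_pmf_cong) (auto simp: set_iid_pmf set_dmc_pmf PiE_dflt_def)
  finally show ?thesis .
qed

lemma log_likelihood_ratio_dmc_pmf:
  assumes x: "x \<in> set_pmf (iid_pmf n P)" and y: "y \<in> set_pmf (dmc_pmf W n x)"
  shows "log 2 (pmf (dmc_pmf W n x) y / pmf (iid_pmf n (bind_pmf P W)) y)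
         = (\<Sum>t<n. info_density P W (x t, y t))"
proof -
  have x_t: "x t \<in> set_pmf P" and y_t: "y t \<in> set_pmf (W (x t))" if "t < n" for t
    using x y that by (auto simp: set_iid_pmf set_dmc_pmf PiE_dflt_def)
  have y_out: "y t = undefined" if "t \<notin> {..<n}" for t
    using y that by (auto simp: set_dmc_pmf PiE_dflt_def)
  define r where "r t = pmf (W (x t)) (y t) / pmf (bind_pmf P W) (y t)" for t
  have r_pos: "r t > 0" if "t < n" for t
  proof -
    have "y t \<in> set_pmf (bind_pmf P W)"
      using x_t[OF that] y_t[OF that] by auto
    then show ?thesis
      using y_t[OF that] by (simp add: r_def pmf_positive)
  qed
  have "pmf (dmc_pmf W n x) y = (\<Prod>t<n. pmf (W (x t)) (y t))"
    unfolding dmc_pmf_def by (rule pmf_Pi') (simp_all add: y_out)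
  moreover have "pmf (iid_pmf n (bind_pmf P W)) y = (\<Prod>t<n. pmf (bind_pmf P W) (y t))"
    unfolding iid_pmf_def by (rule pmf_Pi') (simp_all add: y_out)
  ultimately have ratio: "pmf (dmc_pmf W n x) y / pmf (iid_pmf n (bind_pmf P W)) y = (\<Prod>t<n. r t)"
    by (simp add: r_def prod_dividef)
  have "ln (\<Prod>t<n. r t) = (\<Sum>t<n. ln (r t))"
    by (intro ln_prod) (simp_all add: r_pos[THEN less_imp_neq, symmetric])
  then have "log 2 (\<Prod>t<n. r t) = (\<Sum>t<n. log 2 (r t))"
    by (simp add: log_def sum_divide_distrib)
  with ratio show ?thesis
    by (simp add: info_density_def r_def)
qed

text \<open>Outputs outside the high-likelihood sets are exactly the ones with small empirical
  information density, so the expected probability of missing these sets is a tail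
  probability of a sum of i.i.d.\ information densities.\<close>
lemma expected_miss_le_prob_info_density_sum:
  assumes "finite (set_pmf P)"
  shows "(\<Sum>x\<in>set_pmf (iid_pmf n P). pmf (iid_pmf n P) x *
            measure_pmf.prob (dmc_pmf W n x) (- high_likelihood_outputs P W n T x))
         \<le> measure_pmf.prob (Pi_pmf {..<n} (undefined, undefined) (\<lambda>_. joint_pmf P W))
              {z. (\<Sum>t<n. info_density P W (z t)) \<le> T}"
proof -
  define S where "S = {(x, y). y \<notin> high_likelihood_outputs P W n T x}"
  define J where "J = bind_pmf (iid_pmf n P) (\<lambda>x. map_pmf (Pair x) (dmc_pmf W n x))"
  have "(\<Sum>x\<in>set_pmf (iid_pmf n P). pmf (iid_pmf n P) x *
            measure_pmf.prob (dmc_pmf W n x) (- high_likelihood_outputs P W n T x))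
      = (\<Sum>x\<in>set_pmf (iid_pmf n P). pmf (iid_pmf n P) x *
            measure_pmf.prob (map_pmf (Pair x) (dmc_pmf W n x)) S)"
    by (intro sum.cong refl) (simp add: measure_map_pmf vimage_def S_def Compl_eq)
  also have "\<dots> = measure_pmf.prob J S"
    using assms by (simp add: J_def measure_pmf_prob_bind_finite finite_set_iid_pmf)
  also have "\<dots> = measure_pmf.prob J (S \<inter> set_pmf J)"
    by (simp add: measure_Int_set_pmf)
  also have "\<dots> \<le> measure_pmf.prob J ((\<lambda>(x, y) t. (x t, y t)) -` {z. (\<Sum>t<n. info_density P W (z t)) \<le> T})"
  proof (rule measure_pmf.finite_measure_mono, safe)
    fix x y assume "(x, y) \<in> S" "(x, y) \<in> set_pmf J"
    then have x: "x \<in> set_pmf (iid_pmf n P)" and y: "y \<in> set_pmf (dmc_pmf W n x)"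
      and le: "pmf (dmc_pmf W n x) y \<le> 2 powr T * pmf (iid_pmf n (bind_pmf P W)) y"
      by (auto simp: J_def S_def high_likelihood_outputs_def)
    have "y \<in> set_pmf (bind_pmf (iid_pmf n P) (dmc_pmf W n))"
      using x y by auto
    then have "pmf (iid_pmf n (bind_pmf P W)) y > 0"
      by (simp add: bind_iid_pmf_dmc_pmf pmf_positive)
    with le y have "log 2 (pmf (dmc_pmf W n x) y / pmf (iid_pmf n (bind_pmf P W)) y) \<le> T"
      by (subst log_le_iff) (auto simp: pmf_positive divide_le_eq)
    then show "(x, y) \<in> (\<lambda>(x, y) t. (x t, y t)) -` {z. (\<Sum>t<n. info_density P W (z t)) \<le> T}"
      using log_likelihood_ratio_dmc_pmf[OF x y] by simp
  qed simp
  also have "\<dots> = measure_pmf.prob (Pi_pmf {..<n} (undefined, undefined) (\<lambda>_. joint_pmf P W))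
      {z. (\<Sum>t<n. info_density P W (z t)) \<le> T}"
    by (simp add: Pi_pmf_joint_pmf J_def measure_map_pmf)
  finally show ?thesis .
qed

lemma prob_info_density_sum_le_hoeffding:
  assumes n: "0 < n" and ab: "a < b" and \<delta>: "0 \<le> \<delta>"
    and bounded: "\<And>z. z \<in> set_pmf (joint_pmf P W) \<Longrightarrow> info_density P W z \<in> {a..b}"
  shows "measure_pmf.prob (Pi_pmf {..<n} (undefined, undefined) (\<lambda>_. joint_pmf P W))
           {z. (\<Sum>t<n. info_density P W (z t)) \<le> real n * (mutual_info P W - \<delta>)}
         \<le> exp (- (real n * (2 * \<delta>\<^sup>2 / (b - a)\<^sup>2)))"
proof -
  let ?J = "Pi_pmf {..<n} (undefined, undefined) (\<lambda>_. joint_pmf P W)"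
  have component: "map_pmf (\<lambda>z. z t) ?J = joint_pmf P W" if "t < n" for t
    using that by (subst Pi_pmf_component) auto
  have distr: "distr ?J borel (\<lambda>z. info_density P W (z t))
             = distr (joint_pmf P W) borel (info_density P W)" if "t < n" for t
  proof -
    have "distr ?J borel (\<lambda>z. info_density P W (z t))
        = distr (map_pmf (\<lambda>z. z t) ?J) borel (info_density P W)"
      unfolding map_pmf_rep_eq by (subst distr_distr) (auto simp: o_def)
    then show ?thesis
      using component[OF that] by simp
  qed
  interpret Hoeffding_ineq_iid ?J "{..<n}" "\<lambda>t z. info_density P W (z t)"
      "\<lambda>z. info_density P W (z 0)" a b "mutual_info P W"
  proof unfold_locales
    show "prob_space.indep_vars ?J (\<lambda>_. borel) (\<lambda>t z. info_density P W (z t)) {..<n}"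
      by (intro prob_space.indep_vars_compose2[OF _ indep_vars_Pi_pmf])
         (auto simp: measure_pmf.prob_space_axioms)
    show "distr ?J borel (\<lambda>z. info_density P W (z t)) = distr ?J borel (\<lambda>z. info_density P W (z 0))"
      if "t \<in> {..<n}" for t
      using distr[of t] distr[of 0] that n by simp
    show "AE z in ?J. info_density P W (z 0) \<in> {a..b}"
      using n by (intro AE_pmfI bounded) (auto simp: set_Pi_pmf PiE_dflt_def)
    have "measure_pmf.expectation ?J (\<lambda>z. info_density P W (z 0))
        = measure_pmf.expectation (map_pmf (\<lambda>z. z 0) ?J) (info_density P W)"
      by simp
    then show "mutual_info P W \<equiv> measure_pmf.expectation ?J (\<lambda>z. info_density P W (z 0))"
      using component[OF n] by (simp add: mutual_info_def)
  qed simp_all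
  have "{..<n} \<noteq> {}" "0 \<le> real n * \<delta>"
    using n \<delta> by auto
  then have "measure_pmf.prob ?J {z. (\<Sum>t<n. info_density P W (z t)) \<le> real n * (mutual_info P W - \<delta>)}
      \<le> exp (-2 * (real n * \<delta>)\<^sup>2 / (real n * (b - a)\<^sup>2))"
    using Hoeffding_ineq_le[of "n * \<delta>"] ab by (simp add: right_diff_distrib)
  also have "-2 * (real n * \<delta>)\<^sup>2 / (real n * (b - a)\<^sup>2) = - (real n * (2 * \<delta>\<^sup>2 / (b - a)\<^sup>2))"
    using n by (simp add: power_mult_distrib power2_eq_square[of "real n"])
  finally show ?thesis .
qed

lemma info_density_bounded:
  assumes "finite (set_pmf (joint_pmf P W))"
  obtains a b where "a < b" "\<And>z. z \<in> set_pmf (joint_pmf P W) \<Longrightarrow> info_density P W z \<in> {a..b}"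
proof -
  define M where "M = (\<Sum>z\<in>set_pmf (joint_pmf P W). \<bar>info_density P W z\<bar>)"
  have bound: "\<bar>info_density P W z\<bar> \<le> M" if "z \<in> set_pmf (joint_pmf P W)" for z
    unfolding M_def using assms that by (intro member_le_sum) auto
  have "info_density P W z \<in> {- M - 1..M + 1}" if "z \<in> set_pmf (joint_pmf P W)" for z
    using bound[OF that] by (auto simp: abs_le_iff)
  moreover have "0 \<le> M"
    unfolding M_def by (intro sum_nonneg) auto
  ultimately show ?thesis
    by (intro that[of "- M - 1" "M + 1"]) auto
qed

lemma dmc_code_exists:
  fixes P :: "'x pmf" and W :: "'x \<Rightarrow> 'y pmf"
  assumes P: "finite (set_pmf P)" and W: "\<And>x. finite (set_pmf (W x))" and \<epsilon>: "0 < \<epsilon>" "\<epsilon> < 1"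
  shows "\<exists>xs dec. \<epsilon> - measure_pmf.prob (Pi_pmf {..<n} (undefined, undefined) (\<lambda>_. joint_pmf P W))
                {z. (\<Sum>t<n. info_density P W (z t)) \<le> T}
           \<le> real (length xs) * 2 powr (-T)
         \<and> (\<forall>j<length xs. measure_pmf.prob (dmc_pmf W n (xs!j)) {y. dec y \<noteq> j} \<le> \<epsilon>)"
proof -
  define Y where "Y = (\<Union>x\<in>set_pmf P. set_pmf (W x))"
  have outputs: "set_pmf (dmc_pmf W n x) \<subseteq> PiE_dflt {..<n} undefined (\<lambda>_. Y)"
    if "x \<in> set_pmf (iid_pmf n P)" for x
    using that by (intro set_dmc_pmf_subset) (auto simp: Y_def set_iid_pmf PiE_dflt_def)
  have finite_outputs: "finite (PiE_dflt {..<n} undefined (\<lambda>_. Y))"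
    using P W by (auto simp: Y_def)
  obtain xs dec
    where "\<epsilon> - (\<Sum>x\<in>set_pmf (iid_pmf n P). pmf (iid_pmf n P) x *
              measure_pmf.prob (dmc_pmf W n x) (- high_likelihood_outputs P W n T x))
           \<le> real (length xs) * 2 powr (-T)"
      and "\<And>j. j < length xs \<Longrightarrow> measure_pmf.prob (dmc_pmf W n (xs!j)) {y. dec y \<noteq> j} \<le> \<epsilon>"
    using feinstein_lemma[where V = "dmc_pmf W n" and B = "high_likelihood_outputs P W n T"
          and \<gamma> = "2 powr (-T)", OF finite_outputs finite_set_iid_pmf[OF P] outputs
          prob_high_likelihood_outputs_le[OF W] \<epsilon>]
    by blast
  with expected_miss_le_prob_info_density_sum[OF P, of n W T] show ?thesis
    by (intro exI[of _ xs] exI[of _ dec]) auto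
qed

lemma two_powr_le_of_code_bound:
  fixes c M r \<delta> :: real
  assumes "0 < c" "c \<le> M * 2 powr (- (r + \<delta>))" "log 2 (1 / c) \<le> \<delta>"
  shows "2 powr r \<le> M"
proof -
  have "2 powr (- \<delta>) \<le> 2 powr (- log 2 (1 / c))"
    using assms(3) by simp
  also have "\<dots> = c"
    using assms(1) by (simp add: powr_minus)
  finally have "2 powr r \<le> c * 2 powr (r + \<delta>)"
    by (simp add: powr_add powr_minus field_simps)
  also have "\<dots> \<le> M * 2 powr (- (r + \<delta>)) * 2 powr (r + \<delta>)"
    using assms(2) by (simp add: mult_right_mono)
  also have "\<dots> = M"
    by (simp add: mult.assoc powr_add[symmetric])
  finally show ?thesis .
qed

theorem dmc_coding_theorem:
  fixes P :: "'x pmf" and W :: "'x \<Rightarrow> 'y pmf"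
  assumes P: "finite (set_pmf P)" and W: "\<And>x. finite (set_pmf (W x))"
    and R: "R < mutual_info P W" and \<epsilon>: "0 < \<epsilon>"
  shows "\<exists>n\<ge>N. \<exists>xs dec. 2 powr (real n * R) \<le> real (length xs)
           \<and> (\<forall>j<length xs. measure_pmf.prob (dmc_pmf W n (xs!j)) {y. dec y \<noteq> j} \<le> \<epsilon>)"
proof -
  define \<epsilon>' where "\<epsilon>' = min \<epsilon> (1/2)"
  have \<epsilon>': "0 < \<epsilon>'" "\<epsilon>' < 1" "\<epsilon>' \<le> \<epsilon>"
    using \<epsilon> by (auto simp: \<epsilon>'_def)
  have "finite (set_pmf (joint_pmf P W))"
    using P W by (simp add: joint_pmf_def)
  then obtain a b where ab: "a < b"
    and bounded: "\<And>z. z \<in> set_pmf (joint_pmf P W) \<Longrightarrow> info_density P W z \<in> {a..b}"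
    using info_density_bounded by blast
  define \<delta> where "\<delta> = (mutual_info P W - R) / 2"
  define k where "k = 2 * \<delta>\<^sup>2 / (b - a)\<^sup>2"
  have \<delta>: "0 < \<delta>" and k: "0 < k"
    using R ab by (simp_all add: \<delta>_def k_def)
  obtain n :: nat where n: "max (real (Suc N)) (max (ln (2 / \<epsilon>') / k) (log 2 (2 / \<epsilon>') / \<delta>)) \<le> n"
    using real_arch_simple by blast
  then have "n > 0" "ln (2 / \<epsilon>') \<le> real n * k" "log 2 (1 / (\<epsilon>' / 2)) \<le> real n * \<delta>"
    using k \<delta> by (auto simp: divide_le_eq mult.commute)
  define T where "T = real n * (mutual_info P W - \<delta>)"
  obtain xs dec
    where code: "\<epsilon>' - measure_pmf.prob (Pi_pmf {..<n} (undefined, undefined) (\<lambda>_. joint_pmf P W))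
                  {z. (\<Sum>t<n. info_density P W (z t)) \<le> T} \<le> real (length xs) * 2 powr (-T)"
      and err: "\<And>j. j < length xs \<Longrightarrow> measure_pmf.prob (dmc_pmf W n (xs!j)) {y. dec y \<noteq> j} \<le> \<epsilon>'"
    using dmc_code_exists[where W = W and n = n and T = T, OF P W \<epsilon>'(1,2)] by blast
  have "measure_pmf.prob (Pi_pmf {..<n} (undefined, undefined) (\<lambda>_. joint_pmf P W))
          {z. (\<Sum>t<n. info_density P W (z t)) \<le> T} \<le> exp (- (real n * k))"
    unfolding T_def k_def using \<open>n > 0\<close> ab \<delta> bounded by (intro prob_info_density_sum_le_hoeffding) auto
  also have "\<dots> \<le> exp (- ln (2 / \<epsilon>'))"
    using \<open>ln (2 / \<epsilon>') \<le> real n * k\<close> by simp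
  also have "\<dots> = \<epsilon>' / 2"
    using \<epsilon>' by (simp add: exp_minus)
  finally have "\<epsilon>' / 2 \<le> real (length xs) * 2 powr (-T)"
    using code by linarith
  moreover have "T = real n * R + real n * \<delta>"
    by (simp add: T_def \<delta>_def algebra_simps)
  ultimately have "\<epsilon>' / 2 \<le> real (length xs) * 2 powr (- (real n * R + real n * \<delta>))"
    by simp
  then have "2 powr (real n * R) \<le> real (length xs)"
    using two_powr_le_of_code_bound[OF _ _ \<open>log 2 (1 / (\<epsilon>' / 2)) \<le> real n * \<delta>\<close>] \<epsilon>' by simp
  then show ?thesis
    using n err \<epsilon>' by (intro exI[of _ n] conjI exI[of _ xs] exI[of _ dec] allI impI) force+
qed

section \<open>The channel seen through the number of received ones\<close>

text \<open>The number of ones among K independent BSC(p) outputs for the input bit u.\<close>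
definition bsc_weight_pmf :: "nat \<Rightarrow> real \<Rightarrow> bool \<Rightarrow> nat pmf" where
  "bsc_weight_pmf K p u = binomial_pmf K (if u then 1 - p else p)"

lemma set_bsc_weight_pmf: "0 \<le> p \<Longrightarrow> p \<le> 1 \<Longrightarrow> set_pmf (bsc_weight_pmf K p u) \<subseteq> {..K}"
  unfolding bsc_weight_pmf_def by (auto simp: set_pmf_binomial_eq split: if_splits)

lemma binomial_mean:
  fixes p q :: real
  assumes "p + q = 1"
  shows "(\<Sum>d\<le>K. real (K choose d) * p ^ d * q ^ (K - d) * real d) = real K * p"
proof (cases K)
  case (Suc m)
  have Suc_choose: "real (Suc m choose Suc j) * real (Suc j) = real (Suc m) * real (m choose j)" for j
    using Suc_times_binomial[of j m] by (simp only: of_nat_mult[symmetric] mult.commute)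
  have "(\<Sum>d\<le>Suc m. real (Suc m choose d) * p ^ d * q ^ (Suc m - d) * real d)
      = (\<Sum>j\<le>m. (real (Suc m choose Suc j) * real (Suc j)) * p * (p ^ j * q ^ (m - j)))"
    by (subst sum.atMost_Suc_shift) (simp add: mult_ac)
  also have "\<dots> = real (Suc m) * p * (\<Sum>j\<le>m. real (m choose j) * p ^ j * q ^ (m - j))"
    unfolding Suc_choose by (simp add: sum_distrib_left mult_ac)
  also have "\<dots> = real (Suc m) * p"
    using binomial_ring[of p q m] assms by simp
  finally show ?thesis
    using Suc by simp
qed simp

lemma plogp_mult_powers:
  fixes p q :: real
  assumes "0 \<le> p" "0 \<le> q"
  shows "plogp (p ^ d * q ^ e) = p ^ d * q ^ e * (real d * log 2 p + real e * log 2 q)"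
proof (cases "p ^ d * q ^ e = 0")
  case False
  then have "p ^ d \<noteq> 0" "q ^ e \<noteq> 0"
    by auto
  moreover have "0 \<le> p ^ d" "0 \<le> q ^ e"
    using assms by simp_all
  ultimately have "0 < p ^ d" "0 < q ^ e"
    by (metis le_neq_trans)+
  with False assms show ?thesis
    by (simp add: plogp_def log_mult log_nat_power)
qed (simp add: plogp_def)

lemma plogp_eq: "plogp x = x * log 2 x"
  by (simp add: plogp_def)

lemma binomial_entropy_sum:
  fixes p q :: real
  assumes "0 \<le> p" "0 \<le> q" and pq: "p + q = 1"
  shows "(\<Sum>d\<le>K. real (K choose d) * plogp (p ^ d * q ^ (K - d)))
         = real K * plogp p + real K * plogp q"
proof -
  define c where "c d = real (K choose d) * p ^ d * q ^ (K - d)" for d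
  have "(\<Sum>d\<le>K. real (K choose d) * plogp (p ^ d * q ^ (K - d)))
      = (\<Sum>d\<le>K. log 2 p * (c d * real d) + log 2 q * (real K * c d - c d * real d))"
    using assms(1,2)
    by (intro sum.cong refl) (simp add: plogp_mult_powers c_def of_nat_diff algebra_simps)
  also have "\<dots> = log 2 p * (\<Sum>d\<le>K. c d * real d)
                  + log 2 q * (real K * (\<Sum>d\<le>K. c d) - (\<Sum>d\<le>K. c d * real d))"
    by (simp add: sum.distrib sum_distrib_left right_diff_distrib sum_subtractf)
  also have "(\<Sum>d\<le>K. c d * real d) = real K * p"
    unfolding c_def by (rule binomial_mean[OF pq])
  also have "(\<Sum>d\<le>K. c d) = 1"
    using pq by (simp add: c_def binomial_ring[symmetric] atLeast0AtMost add.commute)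
  also have "real K * 1 - real K * p = real K * q"
  proof -
    have "p = 1 - q"
      using pq by linarith
    then show ?thesis
      by (simp add: right_diff_distrib)
  qed
  finally show ?thesis
    by (simp add: plogp_eq mult_ac)
qed

lemma sum_binomial_symmetric:
  fixes f :: "nat \<Rightarrow> real"
  assumes K: "1 \<le> K" and sym: "\<And>d. d \<le> K \<Longrightarrow> f (K - d) = f d"
  shows "(\<Sum>d\<le>K. real (K choose d) * f d) = 2 * (\<Sum>l<K. real ((K - 1) choose l) * f l)"
proof -
  obtain m where K_eq: "K = Suc m"
    using K by (cases K) auto
  have "(\<Sum>d\<le>Suc m. real (Suc m choose d) * f d)
        = (\<Sum>d\<le>Suc m. real (m choose d) * f d) + (\<Sum>j\<le>m. real (m choose j) * f (Suc j))"
    by (subst (1 2) sum.atMost_Suc_shift) (simp add: sum.distrib algebra_simps)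
  also have "(\<Sum>j\<le>m. real (m choose j) * f (Suc j)) = (\<Sum>j\<le>m. real (m choose (m - j)) * f (Suc (m - j)))"
    using sum.atLeastAtMost_rev[of "\<lambda>j. real (m choose j) * f (Suc j)" 0 m] by (simp add: atLeast0AtMost)
  also have "\<dots> = (\<Sum>j\<le>m. real (m choose j) * f j)"
  proof (intro sum.cong refl)
    fix j assume j: "j \<in> {..m}"
    then have "f (Suc (m - j)) = f j"
      using sym[of "Suc (m - j)"] K_eq by (simp add: Suc_diff_le)
    then show "real (m choose (m - j)) * f (Suc (m - j)) = real (m choose j) * f j"
      using j by (simp add: binomial_symmetric[symmetric])
  qed
  finally show ?thesis
    using K_eq by (simp add: lessThan_Suc_atMost)
qed

lemma scaled_log_ratio_to_mean:
  fixes c w v :: real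
  assumes "c > 0" "w \<ge> 0" "v \<ge> 0"
  shows "c * w * log 2 (c * w / ((c * w + c * v) / 2)) = c * w + c * plogp w - c * w * log 2 (w + v)"
proof (cases "w = 0")
  case False
  with assms have "w > 0" "w + v > 0"
    by simp_all
  moreover have "c * w / ((c * w + c * v) / 2) = 2 * w / (w + v)"
    using assms by (simp add: distrib_left[symmetric])
  ultimately show ?thesis
    by (simp add: log_divide log_mult plogp_eq algebra_simps)
qed (simp add: plogp_def)

lemma mutual_info_uniform_bool:
  fixes W :: "bool \<Rightarrow> 'y pmf"
  assumes "finite Y" and "\<And>u. set_pmf (W u) \<subseteq> Y"
  defines "Q \<equiv> \<lambda>y. (pmf (W True) y + pmf (W False) y) / 2"
  shows "mutual_info (bernoulli_pmf (1/2)) W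
         = (\<Sum>y\<in>Y. (pmf (W True) y * log 2 (pmf (W True) y / Q y)
                    + pmf (W False) y * log 2 (pmf (W False) y / Q y)) / 2)"
proof -
  have pmf_joint: "pmf (joint_pmf (bernoulli_pmf (1/2)) W) (u, y) = pmf (W u) y / 2" for u y
    by (cases u) (simp_all add: joint_pmf_def pmf_bind pmf_map_inj' inj_on_def pmf_eq_0_set_pmf image_iff)
  have "mutual_info (bernoulli_pmf (1/2)) W
      = (\<Sum>z\<in>UNIV \<times> Y. info_density (bernoulli_pmf (1/2)) W z * pmf (joint_pmf (bernoulli_pmf (1/2)) W) z)"
    unfolding mutual_info_def using assms(1,2)
    by (intro integral_measure_pmf_real) (auto simp: joint_pmf_def)
  also have "\<dots> = (\<Sum>u\<in>UNIV. \<Sum>y\<in>Y. info_density (bernoulli_pmf (1/2)) W (u, y)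
                                    * pmf (joint_pmf (bernoulli_pmf (1/2)) W) (u, y))"
    by (simp add: sum.cartesian_product)
  also have "\<dots> = (\<Sum>y\<in>Y. (pmf (W True) y * log 2 (pmf (W True) y / Q y)
                    + pmf (W False) y * log 2 (pmf (W False) y / Q y)) / 2)"
    by (simp add: UNIV_bool pmf_joint info_density_def pmf_bind Q_def sum.distrib add_divide_distrib
                  add_ac mult.commute)
  finally show ?thesis .
qed

lemma binomial_mixture_entropy_sum:
  fixes p :: real
  assumes p: "0 \<le> p" "p \<le> 1" and K: "1 \<le> K"
  defines "q \<equiv> 1 - p"
  defines "w0 \<equiv> \<lambda>d. p ^ d * q ^ (K - d)" and "w1 \<equiv> \<lambda>d. q ^ d * p ^ (K - d)"
  shows "(\<Sum>d\<le>K. real (K choose d) *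
            (w0 d + w1 d + plogp (w0 d) + plogp (w1 d) - plogp (w0 d + w1 d)))
         = 2 * R_coded_f K p"
proof -
  have q: "0 \<le> q" "p + q = 1" "q + p = 1"
    using p by (simp_all add: q_def)
  have "(\<Sum>d\<le>K. real (K choose d) * w0 d) = 1" "(\<Sum>d\<le>K. real (K choose d) * w1 d) = 1"
    using binomial_ring[of p q K] binomial_ring[of q p K] q
    by (simp_all add: w0_def w1_def mult.assoc)
  moreover have "(\<Sum>d\<le>K. real (K choose d) * plogp (w0 d)) = real K * plogp p + real K * plogp q"
    "(\<Sum>d\<le>K. real (K choose d) * plogp (w1 d)) = real K * plogp q + real K * plogp p"
    unfolding w0_def w1_def using p q by (simp_all add: binomial_entropy_sum)
  moreover have "(\<Sum>d\<le>K. real (K choose d) * plogp (w0 d + w1 d))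
      = 2 * (\<Sum>l<K. real ((K - 1) choose l) * plogp (q ^ l * p ^ (K - l) + q ^ (K - l) * p ^ l))"
  proof -
    have "w0 (K - d) + w1 (K - d) = w0 d + w1 d" if "d \<le> K" for d
      using that by (simp add: w0_def w1_def mult.commute)
    then have "(\<Sum>d\<le>K. real (K choose d) * plogp (w0 d + w1 d))
        = 2 * (\<Sum>l<K. real ((K - 1) choose l) * plogp (w0 l + w1 l))"
      by (intro sum_binomial_symmetric[OF K]) simp
    moreover have "w0 l + w1 l = q ^ l * p ^ (K - l) + q ^ (K - l) * p ^ l" for l
      by (simp add: w0_def w1_def mult.commute)
    ultimately show ?thesis
      by simp
  qed
  moreover have "(\<Sum>d\<le>K. real (K choose d) *
            (w0 d + w1 d + plogp (w0 d) + plogp (w1 d) - plogp (w0 d + w1 d)))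
      = (\<Sum>d\<le>K. real (K choose d) * w0 d) + (\<Sum>d\<le>K. real (K choose d) * w1 d)
        + (\<Sum>d\<le>K. real (K choose d) * plogp (w0 d)) + (\<Sum>d\<le>K. real (K choose d) * plogp (w1 d))
        - (\<Sum>d\<le>K. real (K choose d) * plogp (w0 d + w1 d))"
    by (simp add: sum.distrib sum_subtractf distrib_left right_diff_distrib)
  moreover have "R_coded_f K p = 1 + real K * plogp p + real K * plogp q
      - (\<Sum>l<K. real ((K - 1) choose l) * plogp (q ^ l * p ^ (K - l) + q ^ (K - l) * p ^ l))"
    by (simp add: R_coded_f_def Let_def q_def)
  ultimately show ?thesis
    by simp
qed

lemma mutual_info_bsc_weight_pmf:
  assumes p: "0 \<le> p" "p \<le> 1" and K: "1 \<le> K"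
  shows "mutual_info (bernoulli_pmf (1/2)) (bsc_weight_pmf K p) = R_coded_f K p"
proof -
  define c where "c d = real (K choose d)" for d
  define w0 where "w0 d = p ^ d * (1 - p) ^ (K - d)" for d
  define w1 where "w1 d = (1 - p) ^ d * p ^ (K - d)" for d
  have "0 \<le> w0 d" "0 \<le> w1 d" for d
    using p by (simp_all add: w0_def w1_def)
  then have per_letter: "c d * w1 d * log 2 (c d * w1 d / ((c d * w1 d + c d * w0 d) / 2))
      + c d * w0 d * log 2 (c d * w0 d / ((c d * w1 d + c d * w0 d) / 2))
      = c d * (w0 d + w1 d + plogp (w0 d) + plogp (w1 d) - plogp (w0 d + w1 d))" if "d \<le> K" for d
    using that scaled_log_ratio_to_mean[of "c d" "w1 d" "w0 d"] scaled_log_ratio_to_mean[of "c d" "w0 d" "w1 d"]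
    by (simp add: c_def plogp_eq add.commute algebra_simps)
  have "mutual_info (bernoulli_pmf (1/2)) (bsc_weight_pmf K p)
      = (\<Sum>d\<le>K. (c d * w1 d * log 2 (c d * w1 d / ((c d * w1 d + c d * w0 d) / 2))
                 + c d * w0 d * log 2 (c d * w0 d / ((c d * w1 d + c d * w0 d) / 2))) / 2)"
    using p by (subst mutual_info_uniform_bool[OF finite_atMost set_bsc_weight_pmf])
               (simp_all add: bsc_weight_pmf_def c_def w0_def w1_def mult.assoc)
  also have "\<dots> = (\<Sum>d\<le>K. c d * (w0 d + w1 d + plogp (w0 d) + plogp (w1 d) - plogp (w0 d + w1 d))) / 2"
    unfolding sum_divide_distrib using per_letter by (intro sum.cong refl) simp
  also have "\<dots> = R_coded_f K p"
    using binomial_mixture_entropy_sum[OF p K] by (simp add: c_def w0_def w1_def)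
  finally show ?thesis .
qed

section \<open>Forwarding relays\<close>

lemma crossover_bounds:
  fixes ps pd :: real
  assumes "0 \<le> ps" "ps \<le> 1" "0 \<le> pd" "pd \<le> 1"
  shows "0 \<le> ps * (1 - pd) + (1 - ps) * pd" "ps * (1 - pd) + (1 - ps) * pd \<le> 1"
proof -
  show "0 \<le> ps * (1 - pd) + (1 - ps) * pd"
    using assms by simp
  have "0 \<le> (1 - ps) * (1 - pd) + ps * pd"
    using assms by simp
  then show "ps * (1 - pd) + (1 - ps) * pd \<le> 1"
    by (simp add: algebra_simps)
qed

lemma bernoulli_pmf_xor:
  fixes x y :: real
  assumes "0 \<le> x" "x \<le> 1" "0 \<le> y" "y \<le> 1"
  shows "map_pmf (\<lambda>(a, b). a \<noteq> b) (pair_pmf (bernoulli_pmf x) (bernoulli_pmf y))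
         = bernoulli_pmf (x * (1 - y) + (1 - x) * y)"
proof (rule pmf_eqI)
  fix c :: bool
  note crossover_bounds[OF assms]
  moreover have "(\<lambda>(a, b). a \<noteq> b) -` {c}
      = (if c then {(True, False), (False, True)} else {(True, True), (False, False)})"
    by (cases c) auto
  ultimately show "pmf (map_pmf (\<lambda>(a, b). a \<noteq> b) (pair_pmf (bernoulli_pmf x) (bernoulli_pmf y))) c
        = pmf (bernoulli_pmf (x * (1 - y) + (1 - x) * y)) c"
    unfolding pmf_map using assms
    by (cases c) (simp_all add: measure_measure_pmf_finite pmf_pair algebra_simps)
qed

lemma map_pmf_Not_bernoulli_pmf:
  assumes "0 \<le> p" "p \<le> 1"
  shows "map_pmf Not (bernoulli_pmf p) = bernoulli_pmf (1 - p)"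
proof (rule pmf_eqI)
  fix b :: bool
  have "pmf (map_pmf Not (bernoulli_pmf p)) (\<not> (\<not> b)) = pmf (bernoulli_pmf p) (\<not> b)"
    by (rule pmf_map_inj') (auto intro: injI)
  then show "pmf (map_pmf Not (bernoulli_pmf p)) b = pmf (bernoulli_pmf (1 - p)) b"
    using assms by (cases b) simp_all
qed

lemma count_flips_Pi_pmf:
  assumes "0 \<le> p" "p \<le> 1"
  shows "map_pmf (\<lambda>h. card {i\<in>{..<K}. u \<noteq> h i}) (Pi_pmf {..<K} False (\<lambda>_. bernoulli_pmf p))
         = bsc_weight_pmf K p u"
proof (cases u)
  case False
  then show ?thesis
    using assms binomial_pmf_altdef'[of "{..<K}" K p False] by (simp add: bsc_weight_pmf_def)
next
  case True
  have "Pi_pmf {..<K} True (\<lambda>_. bernoulli_pmf (1 - p))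
      = Pi_pmf {..<K} True (\<lambda>_. map_pmf Not (bernoulli_pmf p))"
    using assms by (simp add: map_pmf_Not_bernoulli_pmf)
  also have "\<dots> = map_pmf (\<lambda>h. Not \<circ> h) (Pi_pmf {..<K} False (\<lambda>_. bernoulli_pmf p))"
    by (rule Pi_pmf_map) auto
  finally have flip: "map_pmf (\<lambda>h. Not \<circ> h) (Pi_pmf {..<K} False (\<lambda>_. bernoulli_pmf p))
      = Pi_pmf {..<K} True (\<lambda>_. bernoulli_pmf (1 - p))" ..
  have "map_pmf (\<lambda>h. card {i\<in>{..<K}. u \<noteq> h i}) (Pi_pmf {..<K} False (\<lambda>_. bernoulli_pmf p))
      = map_pmf (\<lambda>f. card {i\<in>{..<K}. f i}) (map_pmf (\<lambda>h. Not \<circ> h) (Pi_pmf {..<K} False (\<lambda>_. bernoulli_pmf p)))"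
    using True by (simp add: pmf.map_comp o_def)
  also have "\<dots> = binomial_pmf K (1 - p)"
    unfolding flip using binomial_pmf_altdef'[of "{..<K}" K "1 - p" True] assms by simp
  finally show ?thesis
    using True by (simp add: bsc_weight_pmf_def)
qed

text \<open>The decoder only looks at the number of ones received at each network use; the code
  symbol t reaches the destination at network use t + 1.\<close>
definition ones_count :: "nat \<Rightarrow> nat \<Rightarrow> (nat \<times> nat \<Rightarrow> bool) \<Rightarrow> nat \<Rightarrow> nat" where
  "ones_count n K Y = (\<lambda>t. if t < n then card {i\<in>{..<K}. Y (Suc t, i)} else undefined)"

lemma forwarding_noise_pmf:
  fixes n K :: nat
  assumes ps: "0 \<le> ps" "ps \<le> 1" and pd: "0 \<le> pd" "pd \<le> 1"
  defines "A \<equiv> {..<n} \<times> {..<K}"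
  shows "map_pmf (\<lambda>(z, e) (t, i). if (t, i) \<in> A then z (t, i) \<noteq> e (Suc t, i) else False)
           (pair_pmf (noise_pmf n K ps) (noise_pmf n K pd))
         = Pi_pmf A False (\<lambda>_. bernoulli_pmf (ps * (1 - pd) + (1 - ps) * pd))"
proof -
  define shift where "shift = (\<lambda>(t :: nat, i :: nat). (Suc t, i))"
  have A_sub: "A \<subseteq> {..n} \<times> {..<K}" "shift ` A \<subseteq> {..n} \<times> {..<K}"
    by (auto simp: A_def shift_def)
  have finite_A: "finite A"
    by (simp add: A_def)
  have "inj shift"
    by (auto simp: shift_def inj_def)
  have restrict: "map_pmf (\<lambda>z j. if j \<in> A then z j else False) (noise_pmf n K ps)
      = Pi_pmf A False (\<lambda>_. bernoulli_pmf ps)"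
    unfolding noise_pmf_def by (rule Pi_pmf_subset[symmetric]) (simp_all add: A_sub)
  have "Pi_pmf A False (\<lambda>_. bernoulli_pmf pd)
      = map_pmf (\<lambda>g. g \<circ> shift) (Pi_pmf (shift ` A) False (\<lambda>_. bernoulli_pmf pd))"
  proof (rule Pi_pmf_bij_betw)
    show "bij_betw shift A (shift ` A)"
      using \<open>inj shift\<close> by (simp add: bij_betw_imageI inj_on_subset)
    show "shift x \<notin> shift ` A" if "x \<notin> A" for x
      using \<open>inj shift\<close> that by (simp add: inj_image_mem_iff)
  qed (simp add: A_def)
  also have "Pi_pmf (shift ` A) False (\<lambda>_. bernoulli_pmf pd)
      = map_pmf (\<lambda>e j. if j \<in> shift ` A then e j else False) (noise_pmf n K pd)"
    unfolding noise_pmf_def by (rule Pi_pmf_subset) (simp_all add: A_sub)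
  finally have shifted: "map_pmf (\<lambda>e j. if j \<in> A then e (shift j) else False) (noise_pmf n K pd)
      = Pi_pmf A False (\<lambda>_. bernoulli_pmf pd)"
    using \<open>inj shift\<close> by (simp add: pmf.map_comp o_def inj_image_mem_iff)
  have "map_pmf (\<lambda>(z, e) (t, i). if (t, i) \<in> A then z (t, i) \<noteq> e (Suc t, i) else False)
          (pair_pmf (noise_pmf n K ps) (noise_pmf n K pd))
      = map_pmf (\<lambda>(f, g) j. if j \<in> A then f j \<noteq> g j else False)
          (pair_pmf (map_pmf (\<lambda>z j. if j \<in> A then z j else False) (noise_pmf n K ps))
                    (map_pmf (\<lambda>e j. if j \<in> A then e (shift j) else False) (noise_pmf n K pd)))"
    unfolding map_pair[symmetric] pmf.map_comp
    by (intro map_pmf_cong refl) (auto simp: fun_eq_iff shift_def)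
  also have "\<dots> = Pi_pmf A False (\<lambda>_. bernoulli_pmf (ps * (1 - pd) + (1 - ps) * pd))"
    unfolding restrict shifted Pi_pmf_map2[OF finite_A, where h = "\<lambda>a b. a \<noteq> b"]
      bernoulli_pmf_xor[OF ps pd] ..
  finally show ?thesis .
qed

lemma ones_count_fwd_output_pmf:
  assumes ps: "0 \<le> ps" "ps \<le> 1" and pd: "0 \<le> pd" "pd \<le> 1"
  shows "map_pmf (\<lambda>(z, e). ones_count n K (fwd_output n K enc w z e))
           (pair_pmf (noise_pmf n K ps) (noise_pmf n K pd))
         = dmc_pmf (bsc_weight_pmf K (ps * (1 - pd) + (1 - ps) * pd)) n (enc w)"
proof -
  define p where "p = ps * (1 - pd) + (1 - ps) * pd"
  define A where "A = {..<n} \<times> {..<K}"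
  define noise where
    "noise = (\<lambda>(z :: nat \<times> nat \<Rightarrow> bool, e) (t, i). if (t, i) \<in> A then z (t, i) \<noteq> e (Suc t, i) else False)"
  define count where
    "count = (\<lambda>H t. if t \<in> {..<n} then card {i\<in>{..<K}. enc w t \<noteq> H t i} else undefined)"
  have "dmc_pmf (bsc_weight_pmf K p) n (enc w) = Pi_pmf {..<n} undefined
      (\<lambda>t. map_pmf (\<lambda>h. card {i\<in>{..<K}. enc w t \<noteq> h i}) (Pi_pmf {..<K} False (\<lambda>_. bernoulli_pmf p)))"
    unfolding dmc_pmf_def p_def using count_flips_Pi_pmf[OF crossover_bounds[OF ps pd]] by simp
  also have "\<dots> = map_pmf count (Pi_pmf {..<n} (\<lambda>_. False) (\<lambda>_. Pi_pmf {..<K} False (\<lambda>_. bernoulli_pmf p)))"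
    unfolding count_def by (rule Pi_pmf_map_dependent) simp
  also have "Pi_pmf {..<n} (\<lambda>_. False) (\<lambda>_. Pi_pmf {..<K} False (\<lambda>_. bernoulli_pmf p))
      = map_pmf (\<lambda>f a b. f (a, b)) (Pi_pmf A False (\<lambda>_. bernoulli_pmf p))"
    unfolding A_def by (rule Pi_pmf_curry[symmetric]) simp_all
  also have "Pi_pmf A False (\<lambda>_. bernoulli_pmf p)
      = map_pmf noise (pair_pmf (noise_pmf n K ps) (noise_pmf n K pd))"
    unfolding noise_def A_def p_def by (rule forwarding_noise_pmf[OF ps pd, symmetric])
  also have "map_pmf count (map_pmf (\<lambda>f a b. f (a, b)) (map_pmf noise (pair_pmf (noise_pmf n K ps) (noise_pmf n K pd))))
      = map_pmf (\<lambda>(z, e). ones_count n K (fwd_output n K enc w z e))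
           (pair_pmf (noise_pmf n K ps) (noise_pmf n K pd))"
    unfolding pmf.map_comp
    by (intro map_pmf_cong refl)
       (auto simp: fun_eq_iff count_def noise_def A_def ones_count_def fwd_output_def
             intro!: arg_cong[where f = card])
  finally show ?thesis
    by (simp add: p_def)
qed

lemma fwd_avg_error_le_max_error:
  assumes ps: "0 \<le> ps" "ps \<le> 1" and pd: "0 \<le> pd" "pd \<le> 1" and "xs \<noteq> []"
    and err: "\<And>j. j < length xs \<Longrightarrow>
      measure_pmf.prob (dmc_pmf (bsc_weight_pmf K (ps * (1 - pd) + (1 - ps) * pd)) n (xs!j))
        {y. dec y \<noteq> j} \<le> \<epsilon>"
  shows "fwd_avg_error n K ps pd (length xs) (\<lambda>w. xs ! w) (\<lambda>Y. dec (ones_count n K Y)) \<le> \<epsilon>"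
proof -
  have "measure_pmf.prob (pair_pmf (noise_pmf n K ps) (noise_pmf n K pd))
          {(z, e). dec (ones_count n K (fwd_output n K (\<lambda>w. xs ! w) w z e)) \<noteq> w} \<le> \<epsilon>"
    if "w < length xs" for w
  proof -
    have "measure_pmf.prob (pair_pmf (noise_pmf n K ps) (noise_pmf n K pd))
          {(z, e). dec (ones_count n K (fwd_output n K (\<lambda>w. xs ! w) w z e)) \<noteq> w}
        = measure_pmf.prob (map_pmf (\<lambda>(z, e). ones_count n K (fwd_output n K (\<lambda>w. xs ! w) w z e))
            (pair_pmf (noise_pmf n K ps) (noise_pmf n K pd))) {y. dec y \<noteq> w}"
      by (simp add: measure_map_pmf vimage_def case_prod_unfold)
    then show ?thesis
      using err[OF that] by (simp add: ones_count_fwd_output_pmf[OF ps pd])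
  qed
  then have "fwd_avg_error n K ps pd (length xs) (\<lambda>w. xs ! w) (\<lambda>Y. dec (ones_count n K Y))
      \<le> (\<Sum>w<length xs. \<epsilon>) / real (length xs)"
    unfolding fwd_avg_error_def by (intro divide_right_mono sum_mono) auto
  also have "\<dots> = \<epsilon>"
    using \<open>xs \<noteq> []\<close> by simp
  finally show ?thesis .
qed

text \<open>The extra network use of the forwarding scheme is absorbed by the slack R' - R.\<close>
lemma rate_le_log_div_Suc:
  fixes R R' :: real
  assumes "R < R'" "R / (R' - R) \<le> real n" "2 powr (real n * R') \<le> real M"
  shows "R \<le> log 2 (real M) / real (n + 1)"
proof -
  have "R \<le> real n * (R' - R)"
    using assms(1,2) by (simp add: divide_le_eq mult.commute)
  then have "real (n + 1) * R \<le> real n * R'"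
    by (simp add: algebra_simps)
  also have "\<dots> = log 2 (2 powr (real n * R'))"
    by simp
  also have "\<dots> \<le> log 2 (real M)"
  proof -
    have "0 < 2 powr (real n * R')"
      by simp
    with assms(3) have "0 < real M"
      by linarith
    with assms(3) show ?thesis
      by (subst log_le_cancel_iff) auto
  qed
  finally show ?thesis
    by (simp add: pos_le_divide_eq mult.commute)
qed

lemma fwd_coded_achievable_if_ones_count_codes:
  assumes ps: "0 \<le> ps" "ps \<le> 1" and pd: "0 \<le> pd" "pd \<le> 1" and "R < R'"
    and codes: "\<And>\<epsilon> N. 0 < \<epsilon> \<Longrightarrow> \<exists>n\<ge>N. \<exists>xs dec. 2 powr (real n * R') \<le> real (length xs)
      \<and> (\<forall>j<length xs. measure_pmf.prob (dmc_pmf (bsc_weight_pmf K (ps * (1 - pd) + (1 - ps) * pd)) n (xs!j))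
                          {y. dec y \<noteq> j} \<le> \<epsilon>)"
  shows "fwd_coded_achievable K ps pd R"
  unfolding fwd_coded_achievable_def
proof (intro allI impI)
  fix \<epsilon> :: real and N :: nat
  assume "\<epsilon> > 0"
  then obtain n xs dec where n: "max N (nat \<lceil>R / (R' - R)\<rceil>) \<le> n"
    and M: "2 powr (real n * R') \<le> real (length xs)"
    and err: "\<forall>j<length xs. measure_pmf.prob (dmc_pmf (bsc_weight_pmf K (ps * (1 - pd) + (1 - ps) * pd)) n (xs!j))
                             {y. dec y \<noteq> j} \<le> \<epsilon>"
    using codes by blast
  have "0 < 2 powr (real n * R')"
    by simp
  with M have "xs \<noteq> []"
    by auto
  moreover have "R \<le> log 2 (real (length xs)) / real (n + 1)"
    using \<open>R < R'\<close> n M real_nat_ceiling_ge[of "R / (R' - R)"]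
    by (intro rate_le_log_div_Suc) auto
  moreover have "fwd_avg_error n K ps pd (length xs) (\<lambda>w. xs ! w) (\<lambda>Y. dec (ones_count n K Y)) \<le> \<epsilon>"
    using err \<open>xs \<noteq> []\<close> by (intro fwd_avg_error_le_max_error[OF ps pd]) simp_all
  ultimately have "N \<le> n \<and> 1 \<le> length xs \<and> R \<le> log 2 (real (length xs)) / real (n + 1)
      \<and> fwd_avg_error n K ps pd (length xs) (\<lambda>w. xs ! w) (\<lambda>Y. dec (ones_count n K Y)) \<le> \<epsilon>"
    using n by (simp add: Suc_le_eq)
  then show "\<exists>n M enc dec. N \<le> n \<and> 1 \<le> M \<and> R \<le> log 2 (real M) / real (n + 1)
      \<and> fwd_avg_error n K ps pd M enc dec \<le> \<epsilon>"
    by blast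
qed

theorem corollary1:
  fixes K :: nat and ps pd R :: real
  assumes "1 \<le> K"
    and "0 \<le> ps" and "ps < 1/2" and "0 \<le> pd" and "pd < 1/2"
    and "R < R_coded_f K (ps * (1 - pd) + (1 - ps) * pd)"
  shows "fwd_coded_achievable K ps pd R"
proof -
  define p where "p = ps * (1 - pd) + (1 - ps) * pd"
  have ps: "0 \<le> ps" "ps \<le> 1" and pd: "0 \<le> pd" "pd \<le> 1"
    using assms by simp_all
  then have p: "0 \<le> p" "p \<le> 1"
    unfolding p_def by (rule crossover_bounds)+
  define R' where "R' = (R + R_coded_f K p) / 2"
  have "R < R'" "R' < mutual_info (bernoulli_pmf (1/2)) (bsc_weight_pmf K p)"
    using assms(6) mutual_info_bsc_weight_pmf[OF p assms(1)] by (simp_all add: R'_def p_def)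
  moreover have "finite (set_pmf (bsc_weight_pmf K p u))" for u
    using set_bsc_weight_pmf[OF p] finite_subset by blast
  ultimately show ?thesis
    unfolding p_def by (intro fwd_coded_achievable_if_ones_count_codes[OF ps pd] dmc_coding_theorem) simp_all
qed

end
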